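(* Let $F$ and $G$ be experiments on the state space $\Theta=\{\theta_0,\ldots,\theta_n\}$. The following are equivalent: (i) $F\succeq_{\textup{LB}}G$; (ii) $\overline{V}_F(\boldsymbol{q})\ge\overline{V}_G(\boldsymbol{q})$ for every binary-action decision problem $\{\mathcal{A},u\}$ and every $\boldsymbol{q}\in\widehat{\Delta}_n$; (iii) for every binary-action decision problem $\{\mathcal{A},u\}$ and every strategy $\sigma_G$ under $G$, there exists a strategy $\sigma_F$ under $F$ with $u(\sigma_F,\theta)\ge u(\sigma_G,\theta)$ for each $\theta\in\Theta$.
   Context: States: $\Theta=\{\theta_0,\ldots,\theta_n\}\subset\mathbb{R}$. An experiment $F$ specifies, for each $\theta$, an absolutely continuous distribution $F(\cdot\mid\theta)$ with density $f(\cdot\mid\theta)$ of a signal in a compact interval $\mathcal{X}$; likewise $G$ with densities $g(\cdot\mid\theta)$ on a compact interval $\mathcal{Y}$. $\widehat{\Delta}_n=\{\boldsymbol{q}\in[0,1]^n:\sum_iq_i\le1\}$; a belief $\boldsymbol{p}\in\widehat{\Delta}_n$ puts mass $p_i$ on $\theta_i$ ($i\ge1$) and $p_0=1-\sum_ip_i$ on $\theta_0$. Posterior $p_{F,i}(x;\boldsymbol{q})=q_if(x\mid\theta_i)/\sum_jq_jf(x\mid\theta_j)$; $\boldsymbol{p}_F(\boldsymbol{q})=(p_{F,1},\ldots,p_{F,n})(X;\boldsymbol{q})$ with $X\sim\sum_jq_jF(\cdot\mid\theta_j)$ (analogously for $G$). $F\succeq_{\textup{LB}}G$ means: for every $\boldsymbol{q}\in\widehat{\Delta}_n$,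 every $\boldsymbol{b}\in\mathbb{R}^n$ and every convex $C:\mathbb{R}\to\mathbb{R}$, $\mathbb{E}[C(\boldsymbol{b}\cdot\boldsymbol{p}_F(\boldsymbol{q}))]\ge\mathbb{E}[C(\boldsymbol{b}\cdot\boldsymbol{p}_G(\boldsymbol{q}))]$. A decision problem $\{\mathcal{A},u\}$ consists of a compact set $\mathcal{A}\subseteq\mathbb{R}^k$ and $u:\mathcal{A}\times\Theta\to\mathbb{R}$ continuous in $a$ for each $\theta$; it is binary-action if $\mathcal{A}=\{a_0,a_1\}$. Let $u(a,\boldsymbol{p})=\sum_{i=0}^np_iu(a,\theta_i)$, $V(\boldsymbol{p})=\max_{a\in\mathcal{A}}u(a,\boldsymbol{p})$ and $\overline{V}_F(\boldsymbol{q})=\mathbb{E}[V(\boldsymbol{p}_F(\boldsymbol{q}))]$. A strategy under $F$ is a measurable map $\sigma_F:\mathcal{X}\to\Delta(\mathcal{A})$, with statewise payoff $u(\sigma_F,\theta)=\int_{\mathcal{X}}\int_{\mathcal{A}}u(a,\theta)\,\sigma_F(x)(da)\,dF(x\mid\theta)$; analogously for $G$. *)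

theory Defs
  imports "HOL-Analysis.Analysis"
begin

text \<open>States theta_0..theta_n are represented by their indices 0..n.
  An experiment on the signal interval X is a family of densities f i (i = 0..n)
  on the compact interval X.\<close>

definition is_experiment :: "nat \<Rightarrow> real set \<Rightarrow> (nat \<Rightarrow> real \<Rightarrow> real) \<Rightarrow> bool" where
  "is_experiment n X f \<longleftrightarrow>
     (\<exists>a b. a \<le> b \<and> X = {a..b}) \<and>
     (\<forall>i\<le>n. (\<forall>x\<in>X. 0 \<le> f i x) \<and> integrable (lebesgue_on X) (f i) \<and>
              (LINT x|lebesgue_on X. f i x) = 1)"

text \<open>The reduced simplex: q i for i = 1..n, with implicit q_0 = 1 - sum.\<close>
definition hat_simplex :: "nat \<Rightarrow> (nat \<Rightarrow> real) set" where
  "hat_simplex n = {q. (\<forall>i\<in>{1..n}. 0 \<le> q i \<and> q i \<le> 1) \<and> (\<Sum>i=1..n. q i) \<le> 1}"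

definition full_prior :: "nat \<Rightarrow> (nat \<Rightarrow> real) \<Rightarrow> nat \<Rightarrow> real" where
  "full_prior n q i = (if i = 0 then 1 - (\<Sum>j=1..n. q j) else q i)"

definition mix :: "nat \<Rightarrow> (nat \<Rightarrow> real \<Rightarrow> real) \<Rightarrow> (nat \<Rightarrow> real) \<Rightarrow> real \<Rightarrow> real" where
  "mix n f q x = (\<Sum>j=0..n. full_prior n q j * f j x)"

definition posterior :: "nat \<Rightarrow> (nat \<Rightarrow> real \<Rightarrow> real) \<Rightarrow> (nat \<Rightarrow> real) \<Rightarrow> nat \<Rightarrow> real \<Rightarrow> real" where
  "posterior n f q i x = full_prior n q i * f i x / mix n f q x"

text \<open>E[h(p_F(q))] where p_F(q) = (p_{F,1},...,p_{F,n})(X;q) and X has density mix.\<close>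
definition expect_post :: "nat \<Rightarrow> real set \<Rightarrow> (nat \<Rightarrow> real \<Rightarrow> real) \<Rightarrow> (nat \<Rightarrow> real)
    \<Rightarrow> ((nat \<Rightarrow> real) \<Rightarrow> real) \<Rightarrow> real" where
  "expect_post n X f q h = (LINT x|lebesgue_on X. h (\<lambda>i. posterior n f q i x) * mix n f q x)"

definition lb_dominates :: "nat \<Rightarrow> real set \<Rightarrow> (nat \<Rightarrow> real \<Rightarrow> real) \<Rightarrow> real set \<Rightarrow> (nat \<Rightarrow> real \<Rightarrow> real) \<Rightarrow> bool" where
  "lb_dominates n X f Y g \<longleftrightarrow>
     (\<forall>q\<in>hat_simplex n. \<forall>b :: nat \<Rightarrow> real. \<forall>C :: real \<Rightarrow> real. convex_on UNIV C \<longrightarrow>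
        expect_post n X f q (\<lambda>p. C (\<Sum>i=1..n. b i * p i))
          \<ge> expect_post n Y g q (\<lambda>p. C (\<Sum>i=1..n. b i * p i)))"

text \<open>Binary-action decision problems: actions a_0 (False) and a_1 (True), u a i = u(a, theta_i).
  Expected utility at belief p (p_0 = 1 - sum_{i>=1} p_i).\<close>
definition util_belief :: "nat \<Rightarrow> (bool \<Rightarrow> nat \<Rightarrow> real) \<Rightarrow> bool \<Rightarrow> (nat \<Rightarrow> real) \<Rightarrow> real" where
  "util_belief n u a p = (1 - (\<Sum>i=1..n. p i)) * u a 0 + (\<Sum>i=1..n. p i * u a i)"

definition value_fn :: "nat \<Rightarrow> (bool \<Rightarrow> nat \<Rightarrow> real) \<Rightarrow> (nat \<Rightarrow> real) \<Rightarrow> real" where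
  "value_fn n u p = max (util_belief n u False p) (util_belief n u True p)"

definition Vbar :: "nat \<Rightarrow> real set \<Rightarrow> (nat \<Rightarrow> real \<Rightarrow> real) \<Rightarrow> (bool \<Rightarrow> nat \<Rightarrow> real) \<Rightarrow> (nat \<Rightarrow> real) \<Rightarrow> real" where
  "Vbar n X f u q = expect_post n X f q (value_fn n u)"

text \<open>A (mixed) strategy for a binary action set: a measurable map s giving the probability
  of playing a_1 (True) after each signal; a_0 is played with probability 1 - s.\<close>
definition is_strategy :: "real set \<Rightarrow> (real \<Rightarrow> real) \<Rightarrow> bool" where
  "is_strategy X s \<longleftrightarrow> s \<in> borel_measurable borel \<and> (\<forall>x\<in>X. 0 \<le> s x \<and> s x \<le> 1)"

definition strat_payoff :: "real set \<Rightarrow> (nat \<Rightarrow> real \<Rightarrow> real) \<Rightarrow> (bool \<Rightarrow> nat \<Rightarrow> real) \<Rightarrow> (real \<Rightarrow> real) \<Rightarrow> nat \<Rightarrow> real" where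
  "strat_payoff X f u s i = (LINT x|lebesgue_on X. (s x * u True i + (1 - s x) * u False i) * f i x)"

end

(*
  All three conditions are equivalent to hinge dominance: for every prior q and every weight
  vector gamma, the integral of the positive part of sum_i gamma_i q_i f(. | theta_i) is at
  least the corresponding integral for G.

  This integral is the value of the binary decision problem whose payoff difference between the
  two actions is gamma, which gives (ii). Hinges max 0 (c + z) are convex, and every convex
  function is, on a compact interval, a uniform limit of nonnegative combinations of hinges,
  which gives (i). Finally, the hinge values are the support function of the convex set of
  vectors (integral of t f(. | theta_i))_i achieved by strategies t, so hinge dominance says that
  no linear functional separates a vector achievable under G from those achievable under F.
  Minimising the squared shortfall of F's achievable vectors below a G-payoff vector (the
  minimum is attained by an L^2 compactness argument in the style of the projection theorem),
  the first-order condition turns non-separation into statewise dominance, which gives (iii).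
*)
theory Submission
  imports Defs
begin

section \<open>Hinge approximation of convex functions\<close>

definition hinge_sum :: "real \<Rightarrow> real \<Rightarrow> nat \<Rightarrow> (nat \<Rightarrow> real) \<Rightarrow> (nat \<Rightarrow> real) \<Rightarrow> real \<Rightarrow> real" where
  "hinge_sum \<alpha> \<beta> N c z x = \<alpha> + \<beta> * x + (\<Sum>k<N. c k * max 0 (x - z k))"

lemma continuous_on_hinge_sum: "continuous_on A (hinge_sum \<alpha> \<beta> N c z)"
  unfolding hinge_sum_def[abs_def] by (intro continuous_intros)

lemma sum_telescoping_slopes:
  fixes c s z :: "nat \<Rightarrow> real"
  assumes slope: "\<And>k. s k * (z (Suc k) - z k) = c (Suc k) - c k"
  shows "c 0 + s 0 * (x - z 0) + (\<Sum>k<j. (s (Suc k) - s k) * (x - z (Suc k))) = c j + s j * (x - z j)"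
proof (induction j)
  case 0
  then show ?case by simp
next
  case (Suc j)
  have "c 0 + s 0 * (x - z 0) + (\<Sum>k<Suc j. (s (Suc k) - s k) * (x - z (Suc k)))
      = c j + s j * (z (Suc j) - z j) + s (Suc j) * (x - z (Suc j))"
    using Suc.IH by (simp add: algebra_simps)
  then show ?case
    using slope[of j] by simp
qed

lemma uniform_grid_cell:
  fixes h :: real
  assumes "lo \<le> x" and "0 < N" and "x \<le> lo + real N * h"
  shows "\<exists>j<N. lo + real j * h \<le> x \<and> x \<le> lo + real (Suc j) * h"
  using assms(2,3)
proof (induction N)
  case 0
  then show ?case by simp
next
  case (Suc N)
  show ?case
  proof (cases "0 < N \<and> x \<le> lo + real N * h")
    case True
    then show ?thesis
      using Suc.IH by (meson less_SucI)
  next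
    case False
    then have "lo + real N * h \<le> x"
      using \<open>lo \<le> x\<close> by auto
    then show ?thesis
      using Suc.prems(2) by blast
  qed
qed

lemma hinge_sum_interpolates:
  fixes c :: "nat \<Rightarrow> real" and lo h x :: real
  defines "z \<equiv> \<lambda>k. lo + real k * h" and "s \<equiv> \<lambda>k. (c (Suc k) - c k) / h"
  assumes h: "0 < h" and j: "j < N" and x: "z j \<le> x" "x \<le> z (Suc j)"
  shows "hinge_sum (c 0 - s 0 * lo) (s 0) (N - 1) (\<lambda>k. s (Suc k) - s k) (\<lambda>k. z (Suc k)) x
           = c j + (x - z j) / h * (c (Suc j) - c j)"
proof -
  have z_mono: "z k \<le> z k'" if "k \<le> k'" for k k'
    unfolding z_def using that h by (simp add: mult_right_mono)
  have "(\<Sum>k<N - 1. (s (Suc k) - s k) * max 0 (x - z (Suc k)))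
      = (\<Sum>k<j. (s (Suc k) - s k) * (x - z (Suc k)))"
  proof (rule sum.mono_neutral_cong_right)
    show "\<forall>k\<in>{..<N - 1} - {..<j}. (s (Suc k) - s k) * max 0 (x - z (Suc k)) = 0"
    proof
      fix k assume "k \<in> {..<N - 1} - {..<j}"
      then show "(s (Suc k) - s k) * max 0 (x - z (Suc k)) = 0"
        using x z_mono[of "Suc j" "Suc k"] by simp
    qed
    show "(s (Suc k) - s k) * max 0 (x - z (Suc k)) = (s (Suc k) - s k) * (x - z (Suc k))"
      if "k \<in> {..<j}" for k
      using x z_mono[of "Suc k" j] that by simp
  qed (use j in auto)
  then have "hinge_sum (c 0 - s 0 * lo) (s 0) (N - 1) (\<lambda>k. s (Suc k) - s k) (\<lambda>k. z (Suc k)) x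
      = c 0 + s 0 * (x - z 0) + (\<Sum>k<j. (s (Suc k) - s k) * (x - z (Suc k)))"
    unfolding hinge_sum_def by (simp add: z_def algebra_simps)
  also have "\<dots> = c j + s j * (x - z j)"
    by (rule sum_telescoping_slopes) (use h in \<open>simp add: s_def z_def field_simps\<close>)
  finally show ?thesis
    unfolding s_def by simp
qed

lemma convex_on_second_difference_nonneg:
  fixes C :: "real \<Rightarrow> real"
  assumes "convex_on UNIV C"
  shows "C (x + h) - C x \<le> C (x + 2 * h) - C (x + h)"
proof -
  have "x + h = (1 - 1/2) *\<^sub>R x + (1/2) *\<^sub>R (x + 2 * h)"
    by (simp add: algebra_simps)
  then have "C (x + h) \<le> (1 - 1/2) * C x + (1/2) * C (x + 2 * h)"
    using convex_onD[OF assms, of "1/2" x "x + 2 * h"] by simp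
  then show ?thesis
    by simp
qed

lemma abs_sub_convex_comb_le:
  fixes a b c \<theta> :: real
  assumes "\<bar>a - b\<bar> \<le> \<epsilon>" "\<bar>a - c\<bar> \<le> \<epsilon>" "0 \<le> \<theta>" "\<theta> \<le> 1"
  shows "\<bar>a - ((1 - \<theta>) * b + \<theta> * c)\<bar> \<le> \<epsilon>"
proof -
  have "\<bar>(1 - \<theta>) * (a - b) + \<theta> * (a - c)\<bar> \<le> (1 - \<theta>) * \<epsilon> + \<theta> * \<epsilon>"
    using assms by (intro abs_triangle_ineq[THEN order_trans] add_mono)
      (simp_all add: abs_mult mult_left_mono)
  then show ?thesis
    by (simp add: algebra_simps)
qed

text \<open>The hinge sum below is the piecewise linear interpolant of \<open>C\<close> on the grid \<open>z\<close>.\<close>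

lemma hinge_sum_interpolation_error:
  fixes C :: "real \<Rightarrow> real" and lo h :: real
  defines "z \<equiv> \<lambda>k. lo + real k * h"
    and "s \<equiv> \<lambda>k. (C (lo + real (Suc k) * h) - C (lo + real k * h)) / h"
  assumes h: "0 < h" and "0 < N"
    and close: "\<And>x y. x \<in> {lo..z N} \<Longrightarrow> y \<in> {lo..z N} \<Longrightarrow> \<bar>y - x\<bar> \<le> h \<Longrightarrow> \<bar>C y - C x\<bar> \<le> \<epsilon>"
    and x: "x \<in> {lo..z N}"
  shows "\<bar>C x - hinge_sum (C lo - s 0 * lo) (s 0) (N - 1) (\<lambda>k. s (Suc k) - s k) (\<lambda>k. z (Suc k)) x\<bar> \<le> \<epsilon>"
proof -
  obtain j where j: "j < N" "z j \<le> x" "x \<le> z (Suc j)"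
    using uniform_grid_cell[of lo x N h] x \<open>0 < N\<close> unfolding z_def by auto
  have z_in: "z k \<in> {lo..z N}" if "k \<le> N" for k
    using that h mult_right_mono[of "real k" "real N" h] unfolding z_def by simp
  define \<theta> where "\<theta> = (x - z j) / h"
  have "z (Suc j) = z j + h"
    unfolding z_def by (simp add: algebra_simps)
  then have near: "\<bar>x - z j\<bar> \<le> h" "\<bar>x - z (Suc j)\<bar> \<le> h" and \<theta>: "0 \<le> \<theta>" "\<theta> \<le> 1"
    using j h by (auto simp: \<theta>_def field_simps)
  have "hinge_sum (C lo - s 0 * lo) (s 0) (N - 1) (\<lambda>k. s (Suc k) - s k) (\<lambda>k. z (Suc k)) x
      = (1 - \<theta>) * C (z j) + \<theta> * C (z (Suc j))"
    using hinge_sum_interpolates[OF h j(1), of lo x "\<lambda>k. C (z k)"] j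
    unfolding s_def \<theta>_def z_def by (simp add: algebra_simps)
  moreover have "\<bar>C x - C (z j)\<bar> \<le> \<epsilon>" "\<bar>C x - C (z (Suc j))\<bar> \<le> \<epsilon>"
    using close[OF z_in x] j near by simp_all
  ultimately show ?thesis
    using \<theta> by (simp add: abs_sub_convex_comb_le)
qed

lemma convex_on_hinge_sum_approx:
  fixes C :: "real \<Rightarrow> real"
  assumes C: "convex_on UNIV C" and \<epsilon>: "0 < \<epsilon>" and "lo < hi"
  obtains \<alpha> \<beta> N c z where "\<And>x. x \<in> {lo..hi} \<Longrightarrow> \<bar>C x - hinge_sum \<alpha> \<beta> N c z x\<bar> \<le> \<epsilon>"
    and "\<And>k. 0 \<le> c k"
proof -
  have "uniformly_continuous_on {lo..hi} C"
    using convex_on_continuous[OF open_UNIV C]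
    by (intro compact_uniformly_continuous) (auto intro: continuous_on_subset)
  then obtain \<delta> where \<delta>: "0 < \<delta>"
    and close: "\<And>x y. x \<in> {lo..hi} \<Longrightarrow> y \<in> {lo..hi} \<Longrightarrow> \<bar>y - x\<bar> < \<delta> \<Longrightarrow> \<bar>C y - C x\<bar> < \<epsilon>"
    using \<epsilon> unfolding uniformly_continuous_on_def dist_real_def by metis
  obtain N :: nat where N: "(hi - lo) / \<delta> < real N"
    using reals_Archimedean2 by blast
  moreover have "0 < (hi - lo) / \<delta>"
    using \<open>lo < hi\<close> \<delta> by simp
  ultimately have "0 < N" by linarith
  define h where "h = (hi - lo) / real N"
  have h: "0 < h" "h < \<delta>" "lo + real N * h = hi"
    unfolding h_def using \<open>0 < N\<close> \<open>lo < hi\<close> N \<delta> by (simp_all add: field_simps)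
  have close_h: "\<bar>C y - C x\<bar> \<le> \<epsilon>"
    if "x \<in> {lo..lo + real N * h}" "y \<in> {lo..lo + real N * h}" "\<bar>y - x\<bar> \<le> h" for x y
  proof -
    have "\<bar>y - x\<bar> < \<delta>"
      using that(3) h(2) by linarith
    then have "\<bar>C y - C x\<bar> < \<epsilon>"
      using close[of x y] that(1,2) h(3) by simp
    then show ?thesis
      by simp
  qed
  define z where "z k = lo + real k * h" for k
  define s where "s k = (C (z (Suc k)) - C (z k)) / h" for k
  show thesis
  proof (rule that[of "C lo - s 0 * lo" "s 0" "N - 1" "\<lambda>k. s (Suc k) - s k" "\<lambda>k. z (Suc k)"])
    show "\<bar>C x - hinge_sum (C lo - s 0 * lo) (s 0) (N - 1) (\<lambda>k. s (Suc k) - s k) (\<lambda>k. z (Suc k)) x\<bar> \<le> \<epsilon>"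
      if x: "x \<in> {lo..hi}" for x
      unfolding s_def z_def
      by (rule hinge_sum_interpolation_error[where C=C and lo=lo and h=h and N=N])
        (use h \<open>0 < N\<close> x in \<open>auto intro: close_h\<close>)
    show "0 \<le> s (Suc k) - s k" for k
      using convex_on_second_difference_nonneg[OF C, of "z k" h] h
      unfolding s_def z_def by (simp add: divide_right_mono algebra_simps)
  qed
qed

lemma convex_on_pos_part_shift: "convex_on UNIV (\<lambda>z. max 0 (c + z :: real))"
proof (rule convex_onI)
  fix x y t :: real assume "0 < t" "t < 1"
  then have "(1 - t) * (c + x) \<le> (1 - t) * max 0 (c + x)" "t * (c + y) \<le> t * max 0 (c + y)"
    "0 \<le> (1 - t) * max 0 (c + x)" "0 \<le> t * max 0 (c + y)"
    by (simp_all add: mult_left_mono)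
  moreover have "c + ((1 - t) *\<^sub>R x + t *\<^sub>R y) = (1 - t) * (c + x) + t * (c + y)"
    by (simp add: algebra_simps)
  ultimately show "max 0 (c + ((1 - t) *\<^sub>R x + t *\<^sub>R y)) \<le> (1 - t) * max 0 (c + x) + t * max 0 (c + y)"
    by simp
qed simp

section \<open>Squared shortfall\<close>

lemma pos_part_sq_add_le: "(max 0 (a + b))\<^sup>2 \<le> (max 0 a)\<^sup>2 + 2 * max 0 a * b + (b::real)\<^sup>2"
proof (cases "0 \<le> a")
  case True
  then have "(max 0 a)\<^sup>2 + 2 * max 0 a * b + b\<^sup>2 = (a + b)\<^sup>2"
    by (simp add: power2_eq_square algebra_simps)
  then show ?thesis
    by (simp add: max_def)
next
  case False
  then have "(max 0 (a + b))\<^sup>2 \<le> (max 0 b)\<^sup>2"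
    by (intro power_mono) auto
  with False show ?thesis
    by (simp add: max_def)
qed

lemma pos_part_sq_midpoint_le: "(max 0 ((a + a') / 2))\<^sup>2 \<le> ((max 0 a)\<^sup>2 + (max 0 (a'::real))\<^sup>2) / 2"
proof -
  have "(max 0 ((a + a') / 2))\<^sup>2 \<le> ((max 0 a + max 0 a') / 2)\<^sup>2"
    by (intro power_mono) (auto simp: max_def)
  also have "\<dots> \<le> ((max 0 a)\<^sup>2 + (max 0 a')\<^sup>2) / 2"
    using sum_squares_ge_zero[of "max 0 a - max 0 a'" 0] by (simp add: power2_eq_square field_simps)
  finally show ?thesis .
qed

definition sq_shortfall :: "nat \<Rightarrow> (nat \<Rightarrow> real) \<Rightarrow> (nat \<Rightarrow> real) \<Rightarrow> (nat \<Rightarrow> real) \<Rightarrow> real" where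
  "sq_shortfall n d w v = (\<Sum>i=0..n. (max 0 (d i * (w i - v i)))\<^sup>2)"

lemma sq_shortfall_nonneg: "0 \<le> sq_shortfall n d w v"
  unfolding sq_shortfall_def by (intro sum_nonneg) auto

lemma sq_shortfall_cong: "(\<And>i. i \<le> n \<Longrightarrow> v i = v' i) \<Longrightarrow> sq_shortfall n d w v = sq_shortfall n d w v'"
  unfolding sq_shortfall_def by (intro sum.cong) auto

lemma sq_shortfall_midpoint_le:
  "sq_shortfall n d w (\<lambda>i. (v i + v' i) / 2) \<le> max (sq_shortfall n d w v) (sq_shortfall n d w v')"
proof -
  have "sq_shortfall n d w (\<lambda>i. (v i + v' i) / 2)
      \<le> (\<Sum>i=0..n. ((max 0 (d i * (w i - v i)))\<^sup>2 + (max 0 (d i * (w i - v' i)))\<^sup>2) / 2)"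
    unfolding sq_shortfall_def
  proof (rule sum_mono)
    fix i
    have "d i * (w i - (v i + v' i) / 2) = (d i * (w i - v i) + d i * (w i - v' i)) / 2"
      by (simp add: field_simps)
    then show "(max 0 (d i * (w i - (v i + v' i) / 2)))\<^sup>2
        \<le> ((max 0 (d i * (w i - v i)))\<^sup>2 + (max 0 (d i * (w i - v' i)))\<^sup>2) / 2"
      by (simp only: pos_part_sq_midpoint_le)
  qed
  also have "\<dots> = (sq_shortfall n d w v + sq_shortfall n d w v') / 2"
    unfolding sq_shortfall_def sum_divide_distrib[symmetric] sum.distrib ..
  also have "\<dots> \<le> max (sq_shortfall n d w v) (sq_shortfall n d w v')"
    by simp
  finally show ?thesis .
qed

lemma tendsto_sq_shortfall:
  "(\<And>i. i \<le> n \<Longrightarrow> (\<lambda>k. vs k i) \<longlonglongrightarrow> v i) \<Longrightarrow> (\<lambda>k. sq_shortfall n d w (vs k)) \<longlonglongrightarrow> sq_shortfall n d w v"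
  unfolding sq_shortfall_def by (intro tendsto_sum tendsto_intros) auto

lemma sq_shortfall_eq_sum: "sq_shortfall n d w v = (\<Sum>i=0..n. d i * max 0 (d i * (w i - v i)) * (w i - v i))"
  unfolding sq_shortfall_def by (intro sum.cong) (auto simp: max_def power2_eq_square)

lemma sq_shortfall_le_0_imp:
  assumes "sq_shortfall n d w v \<le> 0" and "i \<le> n"
  shows "d i * w i \<le> d i * v i"
proof -
  have "sq_shortfall n d w v = 0"
    using assms(1) sq_shortfall_nonneg by (rule antisym)
  then have "(max 0 (d i * (w i - v i)))\<^sup>2 = 0"
    using assms(2) unfolding sq_shortfall_def by (subst (asm) sum_nonneg_eq_0_iff) auto
  then have "d i * (w i - v i) \<le> 0"
    by (metis max.cobounded2 zero_eq_power2)
  then show ?thesis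
    by (simp add: right_diff_distrib)
qed

text \<open>First-order optimality: the derivative of \<open>sq_shortfall\<close> at \<open>v\<close> in direction \<open>D\<close> is
  \<open>-2 \<Sum> d\<^sub>i e\<^sub>i D\<^sub>i\<close>, where \<open>e\<^sub>i\<close> is the shortfall in coordinate \<open>i\<close>.\<close>

lemma sq_shortfall_first_order:
  assumes min: "\<And>\<epsilon>. 0 < \<epsilon> \<Longrightarrow> \<epsilon> \<le> 1 \<Longrightarrow> sq_shortfall n d w v \<le> sq_shortfall n d w (\<lambda>i. v i + \<epsilon> * D i)"
  shows "(\<Sum>i=0..n. d i * max 0 (d i * (w i - v i)) * D i) \<le> 0"
proof (rule ccontr)
  define \<Lambda> where "\<Lambda> = (\<Sum>i=0..n. d i * max 0 (d i * (w i - v i)) * D i)"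
  define Q where "Q = (\<Sum>i=0..n. (d i * D i)\<^sup>2)"
  assume "\<not> ?thesis"
  then have \<Lambda>: "0 < \<Lambda>"
    by (simp add: \<Lambda>_def)
  have Q: "0 \<le> Q"
    unfolding Q_def by (intro sum_nonneg) auto
  define \<epsilon> where "\<epsilon> = min 1 (\<Lambda> / (Q + 1))"
  have \<epsilon>: "0 < \<epsilon>" "\<epsilon> \<le> 1" "\<epsilon> * Q < \<Lambda>"
  proof -
    show "0 < \<epsilon>" "\<epsilon> \<le> 1"
      using \<Lambda> Q by (simp_all add: \<epsilon>_def)
    have "\<epsilon> * Q \<le> \<Lambda> / (Q + 1) * Q"
      using Q by (intro mult_right_mono) (simp_all add: \<epsilon>_def)
    also have "\<dots> < \<Lambda>"
      using \<Lambda> Q by (simp add: field_simps)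
    finally show "\<epsilon> * Q < \<Lambda>" .
  qed
  have "sq_shortfall n d w v \<le> sq_shortfall n d w (\<lambda>i. v i + \<epsilon> * D i)"
    using min \<epsilon> by simp
  also have "\<dots> = (\<Sum>i=0..n. (max 0 (d i * (w i - v i) + (- \<epsilon> * d i * D i)))\<^sup>2)"
    unfolding sq_shortfall_def by (simp add: algebra_simps)
  also have "\<dots> \<le> (\<Sum>i=0..n. (max 0 (d i * (w i - v i)))\<^sup>2
      + 2 * max 0 (d i * (w i - v i)) * (- \<epsilon> * d i * D i) + (- \<epsilon> * d i * D i)\<^sup>2)"
    by (intro sum_mono pos_part_sq_add_le)
  also have "\<dots> = (\<Sum>i=0..n. (max 0 (d i * (w i - v i)))\<^sup>2
      - 2 * \<epsilon> * (d i * max 0 (d i * (w i - v i)) * D i) + \<epsilon>\<^sup>2 * (d i * D i)\<^sup>2)"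
    by (intro sum.cong) (simp_all add: power2_eq_square algebra_simps)
  also have "\<dots> = sq_shortfall n d w v - 2 * \<epsilon> * \<Lambda> + \<epsilon>\<^sup>2 * Q"
    unfolding sq_shortfall_def \<Lambda>_def Q_def by (simp add: sum.distrib sum_subtractf sum_distrib_left)
  finally have "2 * \<Lambda> \<le> \<epsilon> * Q"
    using \<epsilon> by (simp add: power2_eq_square)
  with \<epsilon> \<Lambda> show False
    by linarith
qed

lemma full_prior_nonneg: "q \<in> hat_simplex n \<Longrightarrow> i \<le> n \<Longrightarrow> 0 \<le> full_prior n q i"
  by (auto simp: hat_simplex_def full_prior_def)

lemma sum_full_prior: "(\<Sum>i=0..n. full_prior n q i) = 1"
proof -
  have "(\<Sum>i=Suc 0..n. full_prior n q i) = (\<Sum>i=1..n. q i)"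
    by (intro sum.cong) (auto simp: full_prior_def)
  then show ?thesis
    by (simp add: sum.atLeast_Suc_atMost full_prior_def)
qed

lemma exists_prior_weights:
  fixes c :: "nat \<Rightarrow> real"
  obtains q \<gamma> where "q \<in> hat_simplex n" and "\<And>i. i \<le> n \<Longrightarrow> \<gamma> i * full_prior n q i = c i"
proof
  show "(\<lambda>_. 1 / real (Suc n)) \<in> hat_simplex n"
    unfolding hat_simplex_def by (auto simp: field_simps)
  have "full_prior n (\<lambda>_. 1 / real (Suc n)) i = 1 / real (Suc n)" for i
    unfolding full_prior_def by (auto simp: field_simps)
  then show "real (Suc n) * c i * full_prior n (\<lambda>_. 1 / real (Suc n)) i = c i" for i
    by simp
qed

definition belief_mean :: "nat \<Rightarrow> (nat \<Rightarrow> real) \<Rightarrow> (nat \<Rightarrow> real) \<Rightarrow> real" where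
  "belief_mean n \<gamma> p = (1 - (\<Sum>i=1..n. p i)) * \<gamma> 0 + (\<Sum>i=1..n. p i * \<gamma> i)"

lemma util_belief_eq_belief_mean: "util_belief n u a = belief_mean n (u a)"
  by (simp add: fun_eq_iff util_belief_def belief_mean_def)

lemma belief_mean_eq: "belief_mean n \<gamma> p = \<gamma> 0 + (\<Sum>i=1..n. (\<gamma> i - \<gamma> 0) * p i)"
  by (simp add: belief_mean_def algebra_simps sum_subtractf sum_distrib_left)

lemma belief_mean_shift:
  "belief_mean n (\<lambda>i. (if i = 0 then 0 else b i) - z) p = (\<Sum>i=1..n. b i * p i) - z"
  unfolding belief_mean_eq by (auto intro!: sum.cong)

lemma mult_le_pos_part: "0 \<le> t \<Longrightarrow> t \<le> 1 \<Longrightarrow> t * h \<le> max 0 (h::real)"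
  by (cases "0 \<le> h") (auto simp: mult_left_le_one_le mult_nonneg_nonpos)

lemma abs_le_add_square_div:
  fixes a e :: real
  assumes "0 < e"
  shows "\<bar>a\<bar> \<le> e + a\<^sup>2 / (4 * e)"
proof -
  have "0 \<le> (\<bar>a\<bar> - 2 * e)\<^sup>2"
    by simp
  then have "4 * e * \<bar>a\<bar> \<le> 4 * e * e + a\<^sup>2"
    by (simp add: power2_eq_square algebra_simps)
  with assms show ?thesis
    by (simp add: field_simps)
qed

lemma lebesgue_on_measurable_AE_eq_borel:
  fixes h :: "real \<Rightarrow> real"
  assumes X: "X \<in> sets lebesgue" and h: "h \<in> borel_measurable (lebesgue_on X)"
  obtains h' where "h' \<in> borel_measurable borel" and "AE x in lebesgue_on X. h x = h' x"
proof -
  have "(\<lambda>x. indicator X x *\<^sub>R h x) \<in> borel_measurable lebesgue"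
    using h X by (subst borel_measurable_restrict_space_iff[symmetric]) auto
  then obtain h' where h': "h' \<in> borel_measurable lborel"
    and ae: "AE x in lborel. indicator X x *\<^sub>R h x = h' x"
    by (auto dest: completion_ex_borel_measurable_real)
  from AE_completion[OF ae] have "AE x in lebesgue. indicator X x *\<^sub>R h x = h' x" .
  then have "AE x in lebesgue_on X. h x = h' x"
    using X by (subst AE_restrict_space_iff) (auto elim!: eventually_mono)
  with h' show thesis
    by (intro that) simp_all
qed

locale signal_experiment =
  fixes n :: nat and X :: "real set" and f :: "nat \<Rightarrow> real \<Rightarrow> real"
  assumes is_experiment: "is_experiment n X f"
begin

abbreviation M :: "real measure" where "M \<equiv> lebesgue_on X"

lemma finite_measure_M: "finite_measure M"
proof -
  obtain a b where "X = {a..b}"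
    using is_experiment by (auto simp: is_experiment_def)
  then show ?thesis
    by (simp add: finite_measure_lebesgue_on)
qed

lemma density_nonneg: "i \<le> n \<Longrightarrow> x \<in> X \<Longrightarrow> 0 \<le> f i x"
  using is_experiment by (simp add: is_experiment_def)

lemma integrable_density: "i \<le> n \<Longrightarrow> integrable M (f i)"
  using is_experiment by (simp add: is_experiment_def)

lemma integral_density: "i \<le> n \<Longrightarrow> (\<integral>x. f i x \<partial>M) = 1"
  using is_experiment by (simp add: is_experiment_def)

lemma integrable_bounded_mult:
  fixes h k :: "real \<Rightarrow> real"
  assumes "h \<in> borel_measurable M" and "\<And>x. x \<in> X \<Longrightarrow> \<bar>h x\<bar> \<le> K" and "integrable M k"
  shows "integrable M (\<lambda>x. h x * k x)"
proof (rule Bochner_Integration.integrable_bound[where f="\<lambda>x. K * k x"])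
  have "norm (h x * k x) \<le> norm (K * k x)" if "x \<in> X" for x
  proof -
    have "\<bar>h x\<bar> \<le> \<bar>K\<bar>"
      using assms(2)[OF that] by linarith
    then show ?thesis
      by (simp add: abs_mult mult_right_mono)
  qed
  then show "AE x in M. norm (h x * k x) \<le> norm (K * k x)"
    by (intro AE_I2) simp
qed (use assms(1,3) in auto)

definition weighted_mix :: "(nat \<Rightarrow> real) \<Rightarrow> (nat \<Rightarrow> real) \<Rightarrow> real \<Rightarrow> real" where
  "weighted_mix q \<gamma> x = (\<Sum>i=0..n. \<gamma> i * full_prior n q i * f i x)"

lemma weighted_mix_diff: "weighted_mix q (\<lambda>i. \<gamma> i - \<gamma>' i) x = weighted_mix q \<gamma> x - weighted_mix q \<gamma>' x"
  unfolding weighted_mix_def by (simp add: algebra_simps sum_subtractf)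

lemma integrable_weighted_mix: "integrable M (weighted_mix q \<gamma>)"
  unfolding weighted_mix_def[abs_def] using integrable_density by auto

lemma integral_weighted_mix: "(\<integral>x. weighted_mix q \<gamma> x \<partial>M) = (\<Sum>i=0..n. \<gamma> i * full_prior n q i)"
  unfolding weighted_mix_def using integrable_density integral_density
  by (subst Bochner_Integration.integral_sum) auto

lemma mix_eq_weighted_mix: "mix n f q = weighted_mix q (\<lambda>_. 1)"
  by (simp add: fun_eq_iff mix_def weighted_mix_def)

lemma integrable_mix: "integrable M (mix n f q)"
  unfolding mix_eq_weighted_mix by (rule integrable_weighted_mix)

lemma integral_mix: "(\<integral>x. mix n f q x \<partial>M) = 1"
  unfolding mix_eq_weighted_mix integral_weighted_mix by (simp add: sum_full_prior)

lemma mix_nonneg: "q \<in> hat_simplex n \<Longrightarrow> x \<in> X \<Longrightarrow> 0 \<le> mix n f q x"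
  unfolding mix_def by (intro sum_nonneg mult_nonneg_nonneg full_prior_nonneg density_nonneg) auto

lemma belief_mean_posterior_mult_mix:
  assumes q: "q \<in> hat_simplex n" and x: "x \<in> X"
  shows "belief_mean n \<gamma> (\<lambda>i. posterior n f q i x) * mix n f q x = weighted_mix q \<gamma> x"
proof (cases "mix n f q x = 0")
  case True
  have "\<forall>i\<in>{0..n}. full_prior n q i * f i x = 0"
    using True q x unfolding mix_def
    by (subst sum_nonneg_eq_0_iff[symmetric]) (auto intro!: mult_nonneg_nonneg full_prior_nonneg density_nonneg)
  then have "weighted_mix q \<gamma> x = 0"
    unfolding weighted_mix_def by (auto intro!: sum.neutral)
  with True show ?thesis by simp
next
  case False
  then have "posterior n f q i x * mix n f q x = full_prior n q i * f i x" for i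
    by (simp add: posterior_def)
  then have "belief_mean n \<gamma> (\<lambda>i. posterior n f q i x) * mix n f q x
      = (mix n f q x - (\<Sum>i=1..n. full_prior n q i * f i x)) * \<gamma> 0
        + (\<Sum>i=1..n. full_prior n q i * f i x * \<gamma> i)"
    unfolding belief_mean_def by (simp add: algebra_simps sum_distrib_left sum_distrib_right)
  also have "\<dots> = weighted_mix q \<gamma> x"
    unfolding mix_def weighted_mix_def by (simp add: sum.atLeast_Suc_atMost algebra_simps)
  finally show ?thesis .
qed

lemma posterior_nonneg: "q \<in> hat_simplex n \<Longrightarrow> x \<in> X \<Longrightarrow> i \<le> n \<Longrightarrow> 0 \<le> posterior n f q i x"
  unfolding posterior_def
  by (intro divide_nonneg_nonneg mult_nonneg_nonneg full_prior_nonneg density_nonneg mix_nonneg) auto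

lemma sum_posterior_le_1:
  assumes "q \<in> hat_simplex n" "x \<in> X"
  shows "(\<Sum>i=1..n. posterior n f q i x) \<le> 1"
proof -
  have "(\<Sum>i=1..n. full_prior n q i * f i x) \<le> mix n f q x"
    unfolding mix_def using assms
    by (intro sum_mono2) (auto intro!: mult_nonneg_nonneg full_prior_nonneg density_nonneg)
  moreover have "(\<Sum>i=1..n. posterior n f q i x) = (\<Sum>i=1..n. full_prior n q i * f i x) / mix n f q x"
    by (simp add: posterior_def sum_divide_distrib)
  ultimately show ?thesis
    using mix_nonneg[OF assms] by (cases "mix n f q x = 0") simp_all
qed

lemma borel_measurable_posterior: "i \<le> n \<Longrightarrow> posterior n f q i \<in> borel_measurable M"
  unfolding posterior_def[abs_def] mix_def using integrable_density by measurable

definition hinge_value :: "(nat \<Rightarrow> real) \<Rightarrow> (nat \<Rightarrow> real) \<Rightarrow> real" where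
  "hinge_value q \<gamma> = (\<integral>x. max 0 (weighted_mix q \<gamma> x) \<partial>M)"

lemma integrable_pos_weighted_mix: "integrable M (\<lambda>x. max 0 (weighted_mix q \<gamma> x))"
  using integrable_weighted_mix by (intro integrable_max) auto

lemma Vbar_eq:
  assumes q: "q \<in> hat_simplex n"
  shows "Vbar n X f u q = (\<Sum>i=0..n. u False i * full_prior n q i) + hinge_value q (\<lambda>i. u True i - u False i)"
proof -
  have "value_fn n u (\<lambda>i. posterior n f q i x) * mix n f q x
      = weighted_mix q (u False) x + max 0 (weighted_mix q (\<lambda>i. u True i - u False i) x)"
    if "x \<in> X" for x
  proof -
    have "value_fn n u (\<lambda>i. posterior n f q i x) * mix n f q x
        = max (weighted_mix q (u False) x) (weighted_mix q (u True) x)"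
      using mix_nonneg[OF q that]
      by (simp add: value_fn_def util_belief_eq_belief_mean max_mult_distrib_right
          belief_mean_posterior_mult_mix[OF q that])
    then show ?thesis
      unfolding weighted_mix_diff by (simp add: max_def)
  qed
  then have "Vbar n X f u q = (\<integral>x. weighted_mix q (u False) x + max 0 (weighted_mix q (\<lambda>i. u True i - u False i) x) \<partial>M)"
    unfolding Vbar_def expect_post_def by (intro Bochner_Integration.integral_cong) auto
  also have "\<dots> = (\<integral>x. weighted_mix q (u False) x \<partial>M) + hinge_value q (\<lambda>i. u True i - u False i)"
    unfolding hinge_value_def
    by (rule Bochner_Integration.integral_add[OF integrable_weighted_mix integrable_pos_weighted_mix])
  finally show ?thesis
    by (simp add: integral_weighted_mix)
qed

lemma pos_belief_mean_posterior_mult_mix: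
  assumes q: "q \<in> hat_simplex n" and x: "x \<in> X"
  shows "max 0 (belief_mean n \<gamma> (\<lambda>i. posterior n f q i x)) * mix n f q x = max 0 (weighted_mix q \<gamma> x)"
  using mix_nonneg[OF q x] by (simp add: max_mult_distrib_right belief_mean_posterior_mult_mix[OF q x])

lemma expect_post_hinge:
  assumes q: "q \<in> hat_simplex n"
  shows "expect_post n X f q (\<lambda>p. max 0 (belief_mean n \<gamma> p)) = hinge_value q \<gamma>"
  unfolding expect_post_def hinge_value_def
  using pos_belief_mean_posterior_mult_mix[OF q] by (intro Bochner_Integration.integral_cong) auto

lemma hinge_sum_posterior_mult_mix:
  assumes q: "q \<in> hat_simplex n" and x: "x \<in> X"
  shows "hinge_sum \<alpha> \<beta> N c z (\<Sum>i=1..n. b i * posterior n f q i x) * mix n f q x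
    = \<alpha> * mix n f q x + \<beta> * weighted_mix q (\<lambda>i. if i = 0 then 0 else b i) x
      + (\<Sum>k<N. c k * max 0 (weighted_mix q (\<lambda>i. (if i = 0 then 0 else b i) - z k) x))"
proof -
  let ?p = "\<lambda>i. posterior n f q i x"
  have "(\<Sum>i=1..n. b i * ?p i) = belief_mean n (\<lambda>i. if i = 0 then 0 else b i) ?p"
    using belief_mean_shift[of n b 0 ?p] by simp
  then have "(\<Sum>i=1..n. b i * ?p i) * mix n f q x = weighted_mix q (\<lambda>i. if i = 0 then 0 else b i) x"
    by (simp add: belief_mean_posterior_mult_mix[OF q x])
  moreover have "max 0 ((\<Sum>i=1..n. b i * ?p i) - z k) * mix n f q x
      = max 0 (weighted_mix q (\<lambda>i. (if i = 0 then 0 else b i) - z k) x)" for k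
    unfolding belief_mean_shift[symmetric] by (rule pos_belief_mean_posterior_mult_mix[OF q x])
  ultimately show ?thesis
    by (simp only: hinge_sum_def distrib_right sum_distrib_right mult.assoc)
qed

lemma expect_post_hinge_sum:
  assumes q: "q \<in> hat_simplex n"
  shows "expect_post n X f q (\<lambda>p. hinge_sum \<alpha> \<beta> N c z (\<Sum>i=1..n. b i * p i))
    = \<alpha> + \<beta> * (\<Sum>i=1..n. b i * full_prior n q i)
      + (\<Sum>k<N. c k * hinge_value q (\<lambda>i. (if i = 0 then 0 else b i) - z k))"
proof -
  let ?b = "\<lambda>w i. (if i = 0 then 0 else b i) - w"
  have "expect_post n X f q (\<lambda>p. hinge_sum \<alpha> \<beta> N c z (\<Sum>i=1..n. b i * p i))
    = (\<integral>x. \<alpha> * mix n f q x + \<beta> * weighted_mix q (\<lambda>i. if i = 0 then 0 else b i) x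
          + (\<Sum>k<N. c k * max 0 (weighted_mix q (?b (z k)) x)) \<partial>M)"
    unfolding expect_post_def using hinge_sum_posterior_mult_mix[OF q]
    by (intro Bochner_Integration.integral_cong) auto
  also have "\<dots> = \<alpha> * (\<integral>x. mix n f q x \<partial>M) + \<beta> * (\<integral>x. weighted_mix q (\<lambda>i. if i = 0 then 0 else b i) x \<partial>M)
      + (\<Sum>k<N. c k * hinge_value q (?b (z k)))"
    using integrable_mix integrable_weighted_mix integrable_pos_weighted_mix
    by (simp add: hinge_value_def)
  also have "\<dots> = \<alpha> + \<beta> * (\<Sum>i=1..n. b i * full_prior n q i)
      + (\<Sum>k<N. c k * hinge_value q (?b (z k)))"
    by (simp add: integral_mix integral_weighted_mix sum.atLeast_Suc_atMost)
  finally show ?thesis .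
qed

lemma abs_posterior_comb_le:
  assumes q: "q \<in> hat_simplex n" and x: "x \<in> X"
  shows "\<bar>\<Sum>i=1..n. b i * posterior n f q i x\<bar> \<le> (\<Sum>i=1..n. \<bar>b i\<bar>)"
proof -
  have "\<bar>b i * posterior n f q i x\<bar> \<le> \<bar>b i\<bar>" if i: "i \<in> {1..n}" for i
  proof -
    have "posterior n f q i x \<le> (\<Sum>i=1..n. posterior n f q i x)"
      using i posterior_nonneg[OF q x] by (intro member_le_sum) auto
    then have "posterior n f q i x \<le> 1"
      using sum_posterior_le_1[OF q x] by linarith
    then show ?thesis
      using i posterior_nonneg[OF q x, of i] by (simp add: abs_mult mult_left_le)
  qed
  then have "(\<Sum>i=1..n. \<bar>b i * posterior n f q i x\<bar>) \<le> (\<Sum>i=1..n. \<bar>b i\<bar>)"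
    by (rule sum_mono)
  then show ?thesis
    using sum_abs[of "\<lambda>i. b i * posterior n f q i x" "{1..n}"] by linarith
qed

lemma integrable_continuous_posterior_comb:
  assumes q: "q \<in> hat_simplex n" and \<phi>: "continuous_on UNIV \<phi>"
  shows "integrable M (\<lambda>x. \<phi> (\<Sum>i=1..n. b i * posterior n f q i x) * mix n f q x)"
proof -
  define B where "B = (\<Sum>i=1..n. \<bar>b i\<bar>)"
  have "compact (\<phi> ` {-B..B})"
    using \<phi> by (intro compact_continuous_image) (auto intro: continuous_on_subset)
  then have "bounded (\<phi> ` {-B..B})"
    by (rule compact_imp_bounded)
  then obtain K where "\<forall>y\<in>\<phi> ` {-B..B}. norm y \<le> K"
    unfolding bounded_iff by blast
  then have K: "\<And>z. z \<in> {-B..B} \<Longrightarrow> \<bar>\<phi> z\<bar> \<le> K"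
    by simp
  show ?thesis
  proof (rule integrable_bounded_mult[OF _ _ integrable_mix])
    show "(\<lambda>x. \<phi> (\<Sum>i=1..n. b i * posterior n f q i x)) \<in> borel_measurable M"
      using borel_measurable_posterior
      by (intro borel_measurable_continuous_on[OF \<phi>] borel_measurable_sum borel_measurable_times) auto
    show "\<bar>\<phi> (\<Sum>i=1..n. b i * posterior n f q i x)\<bar> \<le> K" if "x \<in> X" for x
      using abs_posterior_comb_le[OF q that, of b] by (intro K) (auto simp: B_def)
  qed
qed

lemma expect_post_approx:
  assumes q: "q \<in> hat_simplex n" and \<phi>\<^sub>1: "continuous_on UNIV \<phi>\<^sub>1" and \<phi>\<^sub>2: "continuous_on UNIV \<phi>\<^sub>2"
    and close: "\<And>z. \<bar>z\<bar> \<le> (\<Sum>i=1..n. \<bar>b i\<bar>) \<Longrightarrow> \<bar>\<phi>\<^sub>1 z - \<phi>\<^sub>2 z\<bar> \<le> \<epsilon>"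
  shows "\<bar>expect_post n X f q (\<lambda>p. \<phi>\<^sub>1 (\<Sum>i=1..n. b i * p i))
          - expect_post n X f q (\<lambda>p. \<phi>\<^sub>2 (\<Sum>i=1..n. b i * p i))\<bar> \<le> \<epsilon>"
proof -
  let ?Z = "\<lambda>x. \<Sum>i=1..n. b i * posterior n f q i x"
  have "\<bar>\<integral>x. \<phi>\<^sub>1 (?Z x) * mix n f q x - \<phi>\<^sub>2 (?Z x) * mix n f q x \<partial>M\<bar> \<le> (\<integral>x. \<epsilon> * mix n f q x \<partial>M)"
  proof (rule integral_abs_bound_integral)
    show "integrable M (\<lambda>x. \<phi>\<^sub>1 (?Z x) * mix n f q x - \<phi>\<^sub>2 (?Z x) * mix n f q x)"
      using integrable_continuous_posterior_comb[OF q \<phi>\<^sub>1] integrable_continuous_posterior_comb[OF q \<phi>\<^sub>2]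
      by (rule Bochner_Integration.integrable_diff)
    show "integrable M (\<lambda>x. \<epsilon> * mix n f q x)"
      using integrable_mix by simp
    fix x assume "x \<in> space M"
    then have x: "x \<in> X" by simp
    have "\<bar>\<phi>\<^sub>1 (?Z x) - \<phi>\<^sub>2 (?Z x)\<bar> * mix n f q x \<le> \<epsilon> * mix n f q x"
      using close[OF abs_posterior_comb_le[OF q x]] mix_nonneg[OF q x] by (rule mult_right_mono)
    then show "\<bar>\<phi>\<^sub>1 (?Z x) * mix n f q x - \<phi>\<^sub>2 (?Z x) * mix n f q x\<bar> \<le> \<epsilon> * mix n f q x"
      using mix_nonneg[OF q x] by (simp add: abs_mult left_diff_distrib[symmetric])
  qed
  then show ?thesis
    using integrable_continuous_posterior_comb[OF q \<phi>\<^sub>1] integrable_continuous_posterior_comb[OF q \<phi>\<^sub>2]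
    by (simp add: expect_post_def integral_mix)
qed

definition act_prob :: "(real \<Rightarrow> real) \<Rightarrow> nat \<Rightarrow> real" where
  "act_prob t i = (\<integral>x. t x * f i x \<partial>M)"

lemma borel_measurable_strategy: "is_strategy X t \<Longrightarrow> t \<in> borel_measurable M"
  unfolding is_strategy_def by (intro measurable_restrict_space1 measurable_completion) simp

lemma integrable_strategy_mult: "is_strategy X t \<Longrightarrow> integrable M h \<Longrightarrow> integrable M (\<lambda>x. t x * h x)"
  by (rule integrable_bounded_mult[OF borel_measurable_strategy]) (auto simp: is_strategy_def)

lemma integrable_strategy:
  assumes "is_strategy X t"
  shows "integrable M t"
proof -
  have "integrable M (\<lambda>x. t x * 1)"
    by (intro integrable_strategy_mult[OF assms] finite_measure.integrable_const[OF finite_measure_M])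
  then show ?thesis
    by simp
qed

lemma strat_payoff_eq:
  assumes t: "is_strategy X t" and i: "i \<le> n"
  shows "strat_payoff X f u t i = u False i + (u True i - u False i) * act_prob t i"
proof -
  have "strat_payoff X f u t i = (\<integral>x. u False i * f i x + (u True i - u False i) * (t x * f i x) \<partial>M)"
    unfolding strat_payoff_def by (intro Bochner_Integration.integral_cong) (auto simp: algebra_simps)
  also have "\<dots> = u False i + (u True i - u False i) * act_prob t i"
    using integrable_strategy_mult[OF t integrable_density[OF i]] integrable_density[OF i]
    by (simp add: act_prob_def integral_density[OF i])
  finally show ?thesis .
qed

lemma integral_strategy_weighted_mix:
  assumes t: "is_strategy X t"
  shows "(\<integral>x. t x * weighted_mix q \<gamma> x \<partial>M) = (\<Sum>i=0..n. \<gamma> i * full_prior n q i * act_prob t i)"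
proof -
  have "(\<integral>x. t x * weighted_mix q \<gamma> x \<partial>M) = (\<integral>x. (\<Sum>i=0..n. \<gamma> i * full_prior n q i * (t x * f i x)) \<partial>M)"
    unfolding weighted_mix_def
    by (intro Bochner_Integration.integral_cong) (auto simp: sum_distrib_left algebra_simps)
  also have "\<dots> = (\<Sum>i=0..n. \<gamma> i * full_prior n q i * act_prob t i)"
    using integrable_strategy_mult[OF t integrable_density]
    by (subst Bochner_Integration.integral_sum) (auto simp: act_prob_def)
  finally show ?thesis .
qed

lemma strategy_value_le_hinge_value:
  assumes t: "is_strategy X t"
  shows "(\<Sum>i=0..n. \<gamma> i * full_prior n q i * act_prob t i) \<le> hinge_value q \<gamma>"
  unfolding integral_strategy_weighted_mix[OF t, symmetric] hinge_value_def
proof (rule integral_mono)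
  show "integrable M (\<lambda>x. t x * weighted_mix q \<gamma> x)"
    by (rule integrable_strategy_mult[OF t integrable_weighted_mix])
  show "t x * weighted_mix q \<gamma> x \<le> max 0 (weighted_mix q \<gamma> x)" if "x \<in> space M" for x
    using t that by (intro mult_le_pos_part) (auto simp: is_strategy_def)
qed (rule integrable_pos_weighted_mix)

text \<open>The bang-bang strategy playing \<open>a\<^sub>1\<close> where the signed density is positive is optimal; as a
  strategy must be Borel measurable, it is built from a Borel version of that density.\<close>

lemma exists_strategy_attaining_hinge_value:
  obtains t where "is_strategy X t"
    and "(\<Sum>i=0..n. \<gamma> i * full_prior n q i * act_prob t i) = hinge_value q \<gamma>"
proof -
  have "X \<in> sets lebesgue"
    using is_experiment by (auto simp: is_experiment_def)
  then obtain h where h: "h \<in> borel_measurable borel" and ae: "AE x in M. weighted_mix q \<gamma> x = h x"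
    using lebesgue_on_measurable_AE_eq_borel integrable_weighted_mix by blast
  define t where "t x = (if 0 < h x then 1 else 0 :: real)" for x
  have "t \<in> borel_measurable borel"
    unfolding t_def using h by measurable
  then have t: "is_strategy X t"
    unfolding is_strategy_def t_def by auto
  have "(\<integral>x. t x * weighted_mix q \<gamma> x \<partial>M) = hinge_value q \<gamma>"
    unfolding hinge_value_def
  proof (rule integral_cong_AE)
    show "(\<lambda>x. t x * weighted_mix q \<gamma> x) \<in> borel_measurable M"
      using integrable_strategy_mult[OF t integrable_weighted_mix] by blast
    show "(\<lambda>x. max 0 (weighted_mix q \<gamma> x)) \<in> borel_measurable M"
      using integrable_pos_weighted_mix by blast
    show "AE x in M. t x * weighted_mix q \<gamma> x = max 0 (weighted_mix q \<gamma> x)"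
      using ae by eventually_elim (auto simp: t_def)
  qed
  with t show thesis
    by (intro that) (simp_all add: integral_strategy_weighted_mix)
qed

lemma is_strategy_convex_comb:
  assumes "is_strategy X t\<^sub>1" "is_strategy X t\<^sub>2" "0 \<le> e" "e \<le> 1"
  shows "is_strategy X (\<lambda>x. (1 - e) * t\<^sub>1 x + e * t\<^sub>2 x)"
proof -
  have "0 \<le> (1 - e) * t\<^sub>1 x + e * t\<^sub>2 x \<and> (1 - e) * t\<^sub>1 x + e * t\<^sub>2 x \<le> 1" if "x \<in> X" for x
    using assms that convex_bound_le[of "t\<^sub>1 x" 1 "t\<^sub>2 x" "1 - e" e]
    by (auto simp: is_strategy_def)
  with assms show ?thesis
    by (auto simp: is_strategy_def)
qed

lemma act_prob_convex_comb:
  assumes "is_strategy X t\<^sub>1" "is_strategy X t\<^sub>2" "i \<le> n"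
  shows "act_prob (\<lambda>x. (1 - e) * t\<^sub>1 x + e * t\<^sub>2 x) i = (1 - e) * act_prob t\<^sub>1 i + e * act_prob t\<^sub>2 i"
proof -
  have "act_prob (\<lambda>x. (1 - e) * t\<^sub>1 x + e * t\<^sub>2 x) i
      = (\<integral>x. (1 - e) * (t\<^sub>1 x * f i x) + e * (t\<^sub>2 x * f i x) \<partial>M)"
    unfolding act_prob_def by (intro Bochner_Integration.integral_cong) (auto simp: algebra_simps)
  then show ?thesis
    using integrable_strategy_mult[OF assms(1) integrable_density[OF assms(3)]]
      integrable_strategy_mult[OF assms(2) integrable_density[OF assms(3)]]
    by (simp add: act_prob_def)
qed

lemma midpoint_eq_convex_comb: "(\<lambda>x. (t\<^sub>1 x + t\<^sub>2 x) / 2) = (\<lambda>x. (1 - 1/2) * t\<^sub>1 x + 1/2 * t\<^sub>2 x :: real)"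
  by (simp add: fun_eq_iff field_simps)

lemma is_strategy_midpoint:
  "is_strategy X t\<^sub>1 \<Longrightarrow> is_strategy X t\<^sub>2 \<Longrightarrow> is_strategy X (\<lambda>x. (t\<^sub>1 x + t\<^sub>2 x) / 2)"
  unfolding midpoint_eq_convex_comb by (rule is_strategy_convex_comb) auto

lemma act_prob_midpoint:
  "is_strategy X t\<^sub>1 \<Longrightarrow> is_strategy X t\<^sub>2 \<Longrightarrow> i \<le> n
    \<Longrightarrow> act_prob (\<lambda>x. (t\<^sub>1 x + t\<^sub>2 x) / 2) i = (act_prob t\<^sub>1 i + act_prob t\<^sub>2 i) / 2"
  unfolding midpoint_eq_convex_comb using act_prob_convex_comb[of t\<^sub>1 t\<^sub>2 i "1/2"] by simp

lemma act_prob_tendsto: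
  assumes s: "\<And>k. is_strategy X (s k)" and t: "is_strategy X t"
    and lim: "AE x in M. (\<lambda>k. s k x) \<longlonglongrightarrow> t x" and i: "i \<le> n"
  shows "(\<lambda>k. act_prob (s k) i) \<longlonglongrightarrow> act_prob t i"
  unfolding act_prob_def
proof (rule integral_dominated_convergence[where w="f i"])
  show "(\<lambda>x. t x * f i x) \<in> borel_measurable M" "(\<lambda>x. s k x * f i x) \<in> borel_measurable M" for k
    using integrable_strategy_mult[OF t integrable_density[OF i]]
      integrable_strategy_mult[OF s integrable_density[OF i]] by auto
  show "AE x in M. (\<lambda>k. s k x * f i x) \<longlonglongrightarrow> t x * f i x"
    using lim by eventually_elim (rule tendsto_mult_right)
  show "AE x in M. norm (s k x * f i x) \<le> f i x" for k
  proof (rule AE_I2)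
    fix x assume "x \<in> space M"
    then have "x \<in> X" by simp
    then have "\<bar>s k x\<bar> * f i x \<le> 1 * f i x"
      using s[of k] density_nonneg[OF i] by (intro mult_right_mono) (auto simp: is_strategy_def)
    then show "norm (s k x * f i x) \<le> f i x"
      using density_nonneg[OF i \<open>x \<in> X\<close>] by (simp add: abs_mult)
  qed
qed (rule integrable_density[OF i])

subsection \<open>Existence of minimising strategies\<close>

lemma integrable_strategy_sq: "is_strategy X t \<Longrightarrow> integrable M (\<lambda>x. (t x)\<^sup>2)"
  using integrable_strategy_mult[OF _ integrable_strategy, of t t] by (simp add: power2_eq_square)

lemma integrable_strategy_sq_diff:
  assumes "is_strategy X t\<^sub>1" "is_strategy X t\<^sub>2"
  shows "integrable M (\<lambda>x. (t\<^sub>1 x - t\<^sub>2 x)\<^sup>2)"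
proof -
  have "integrable M (\<lambda>x. (t\<^sub>1 x - t\<^sub>2 x) * (t\<^sub>1 x - t\<^sub>2 x))"
  proof (rule integrable_bounded_mult[where K=1])
    show "(\<lambda>x. t\<^sub>1 x - t\<^sub>2 x) \<in> borel_measurable M"
      using borel_measurable_strategy[OF assms(1)] borel_measurable_strategy[OF assms(2)] by simp
    show "\<bar>t\<^sub>1 x - t\<^sub>2 x\<bar> \<le> 1" if "x \<in> X" for x
    proof -
      have "0 \<le> t\<^sub>1 x" "t\<^sub>1 x \<le> 1" "0 \<le> t\<^sub>2 x" "t\<^sub>2 x \<le> 1"
        using assms that by (auto simp: is_strategy_def)
      then show ?thesis
        by (simp add: abs_le_iff)
    qed
    show "integrable M (\<lambda>x. t\<^sub>1 x - t\<^sub>2 x)"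
      using integrable_strategy[OF assms(1)] integrable_strategy[OF assms(2)] by simp
  qed
  then show ?thesis
    by (simp add: power2_eq_square)
qed

lemma integral_strategy_sq_le:
  assumes "is_strategy X t"
  shows "(\<integral>x. (t x)\<^sup>2 \<partial>M) \<le> measure M (space M)"
proof -
  have "(\<integral>x. (t x)\<^sup>2 \<partial>M) \<le> (\<integral>x. 1 \<partial>M)"
    using assms integrable_strategy_sq[OF assms]
    by (intro integral_mono finite_measure.integrable_const[OF finite_measure_M])
      (auto simp: is_strategy_def intro: power_le_one)
  then show ?thesis
    by simp
qed

lemma integral_sq_diff_strategies:
  assumes a: "is_strategy X a" and b: "is_strategy X b"
  shows "(\<integral>x. (a x - b x)\<^sup>2 \<partial>M)
    = 2 * (\<integral>x. (a x)\<^sup>2 \<partial>M) + 2 * (\<integral>x. (b x)\<^sup>2 \<partial>M) - 4 * (\<integral>x. ((a x + b x) / 2)\<^sup>2 \<partial>M)"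
proof -
  have "(\<integral>x. (a x - b x)\<^sup>2 \<partial>M)
      = (\<integral>x. 2 * (a x)\<^sup>2 + 2 * (b x)\<^sup>2 - 4 * ((a x + b x) / 2)\<^sup>2 \<partial>M)"
    by (intro Bochner_Integration.integral_cong) (auto simp: power2_eq_square field_simps)
  then show ?thesis
    using integrable_strategy_sq[OF a] integrable_strategy_sq[OF b]
      integrable_strategy_sq[OF is_strategy_midpoint[OF a b]]
    by simp
qed

lemma strategy_L1_Cauchy:
  fixes hh :: "nat \<Rightarrow> real \<Rightarrow> real"
  assumes hh: "\<And>m. is_strategy X (hh m)" and \<eta>: "\<eta> \<longlonglongrightarrow> 0"
    and sq: "\<And>m m'. m \<le> m' \<Longrightarrow> (\<integral>x. (hh m x - hh m' x)\<^sup>2 \<partial>M) \<le> \<eta> m"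
    and \<epsilon>: "0 < \<epsilon>"
  shows "\<exists>N. \<forall>i\<ge>N. \<forall>j\<ge>N. (\<integral>x. norm (hh i x - hh j x) \<partial>M) < \<epsilon>"
proof -
  define \<mu> where "\<mu> = measure M (space M)"
  define e where "e = \<epsilon> / (2 * (\<mu> + 1))"
  have \<mu>: "0 \<le> \<mu>"
    unfolding \<mu>_def by simp
  have e: "0 < e" "e * \<mu> < \<epsilon> / 2"
    using \<epsilon> \<mu> by (auto simp: e_def field_simps)
  have L1_bound: "(\<integral>x. norm (hh m x - hh m' x) \<partial>M) \<le> e * \<mu> + \<eta> m / (4 * e)" if "m \<le> m'" for m m'
  proof -
    have "(\<integral>x. norm (hh m x - hh m' x) \<partial>M) \<le> (\<integral>x. e + (hh m x - hh m' x)\<^sup>2 / (4 * e) \<partial>M)"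
      using abs_le_add_square_div[OF e(1)] integrable_strategy[OF hh] integrable_strategy_sq_diff[OF hh hh]
      by (intro integral_mono Bochner_Integration.integrable_add
          finite_measure.integrable_const[OF finite_measure_M] integrable_divide_zero) auto
    also have "\<dots> = e * \<mu> + (\<integral>x. (hh m x - hh m' x)\<^sup>2 \<partial>M) / (4 * e)"
      using integrable_strategy_sq_diff[OF hh hh]
      by (subst Bochner_Integration.integral_add)
        (auto simp: \<mu>_def mult.commute intro: finite_measure.integrable_const[OF finite_measure_M])
    also have "\<dots> \<le> e * \<mu> + \<eta> m / (4 * e)"
      using sq[OF that] e(1) by (simp add: divide_right_mono)
    finally show ?thesis .
  qed
  obtain N where N: "\<And>m. N \<le> m \<Longrightarrow> \<eta> m < 2 * e * \<epsilon>"
    using \<eta> e(1) \<epsilon> unfolding lim_sequentially dist_real_def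
    by (metis abs_less_iff diff_zero mult_pos_pos zero_less_numeral)
  have "(\<integral>x. norm (hh i x - hh j x) \<partial>M) < \<epsilon>" if "N \<le> i" "i \<le> j" for i j
  proof -
    have "\<eta> i / (4 * e) < \<epsilon> / 2"
      using N[OF that(1)] e(1) by (simp add: field_simps)
    then show ?thesis
      using L1_bound[OF that(2)] e(2) by linarith
  qed
  moreover have "(\<integral>x. norm (hh i x - hh j x) \<partial>M) = (\<integral>x. norm (hh j x - hh i x) \<partial>M)" for i j
    by (simp add: abs_minus_commute)
  ultimately have "(\<integral>x. norm (hh i x - hh j x) \<partial>M) < \<epsilon>" if "N \<le> i" "N \<le> j" for i j
    using that by (metis nle_le)
  then show ?thesis
    by blast
qed

lemma strategy_AE_limit:
  fixes hh :: "nat \<Rightarrow> real \<Rightarrow> real"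
  assumes hh: "\<And>m. is_strategy X (hh m)"
    and Cauchy: "\<And>\<epsilon>. 0 < \<epsilon> \<Longrightarrow> \<exists>N. \<forall>i\<ge>N. \<forall>j\<ge>N. (\<integral>x. norm (hh i x - hh j x) \<partial>M) < \<epsilon>"
  obtains t r where "is_strategy X t" and "strict_mono r" and "AE x in M. (\<lambda>k. hh (r k) x) \<longlonglongrightarrow> t x"
proof -
  obtain r where r: "strict_mono r" and ae: "AE x in M. Cauchy (\<lambda>k. hh (r k) x)"
    by (rule cauchy_L1_AE_cauchy_subseq[OF integrable_strategy[OF hh] Cauchy])
  define t where "t x = max 0 (min 1 (lim (\<lambda>k. hh (r k) x)))" for x
  have "(\<lambda>x. lim (\<lambda>k. hh (r k) x)) \<in> borel_measurable borel"
    using hh by (intro borel_measurable_lim_metric) (auto simp: is_strategy_def)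
  then have "t \<in> borel_measurable borel"
    unfolding t_def by (intro borel_measurable_max borel_measurable_min borel_measurable_const)
  then have "is_strategy X t"
    unfolding is_strategy_def t_def by auto
  moreover have "AE x in M. (\<lambda>k. hh (r k) x) \<longlonglongrightarrow> t x"
    using ae AE_space
  proof eventually_elim
    case (elim x)
    then have lim: "(\<lambda>k. hh (r k) x) \<longlonglongrightarrow> lim (\<lambda>k. hh (r k) x)"
      by (simp add: Cauchy_convergent_iff convergent_LIMSEQ_iff)
    from elim have "0 \<le> hh (r k) x" "hh (r k) x \<le> 1" for k
      using hh by (auto simp: is_strategy_def)
    then have "lim (\<lambda>k. hh (r k) x) \<in> {0..1}"
      using LIMSEQ_le_const[OF lim] LIMSEQ_le_const2[OF lim] by auto
    with lim show ?case
      by (simp add: t_def)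
  qed
  ultimately show thesis
    using r that by blast
qed

text \<open>Pick in each \<open>S m\<close> a strategy of almost minimal \<open>L\<^sup>2\<close> norm. Since the sets shrink and
  are closed under midpoints, the parallelogram law makes these choices \<open>L\<^sup>2\<close>-Cauchy, as in
  the projection theorem for Hilbert spaces.\<close>

lemma exists_L2_Cauchy_selection:
  fixes S :: "nat \<Rightarrow> (real \<Rightarrow> real) set"
  assumes ne: "\<And>m. S m \<noteq> {}" and decr: "\<And>m m'. m \<le> m' \<Longrightarrow> S m' \<subseteq> S m"
    and strat: "\<And>m t. t \<in> S m \<Longrightarrow> is_strategy X t"
    and mid: "\<And>m t\<^sub>1 t\<^sub>2. t\<^sub>1 \<in> S m \<Longrightarrow> t\<^sub>2 \<in> S m \<Longrightarrow> (\<lambda>x. (t\<^sub>1 x + t\<^sub>2 x) / 2) \<in> S m"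
  obtains hh \<eta> where "\<And>m. hh m \<in> S m" and "\<eta> \<longlonglongrightarrow> 0"
    and "\<And>m m'. m \<le> m' \<Longrightarrow> (\<integral>x. (hh m x - hh m' x)\<^sup>2 \<partial>M) \<le> \<eta> m"
proof -
  define N where "N t = (\<integral>x. (t x)\<^sup>2 \<partial>M)" for t :: "real \<Rightarrow> real"
  define D where "D m = Inf (N ` S m)" for m
  have bdd: "bdd_below (N ` S m)" for m
    by (rule bdd_belowI[where m=0]) (auto simp: N_def)
  have D_le: "D m \<le> N t" if "t \<in> S m" for m t
    unfolding D_def using that bdd by (rule cInf_lower[OF imageI])
  have "incseq D"
    unfolding incseq_def D_def by (intro allI impI cInf_superset_mono image_mono decr) (use ne bdd in auto)
  moreover have "bdd_above (range D)"
    using ne D_le integral_strategy_sq_le[OF strat] unfolding N_def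
    by (intro bdd_aboveI[where M="measure M (space M)"]) (force intro: order_trans)
  ultimately have D_lim: "D \<longlonglongrightarrow> (SUP m. D m)" and D_le_Sup: "D m \<le> (SUP m. D m)" for m
    by (auto intro: LIMSEQ_incseq_SUP cSUP_upper)
  have "\<exists>t\<in>S m. N t < D m + 1 / real (Suc m)" for m
    using cInf_lessD[of "N ` S m" "D m + 1 / real (Suc m)"] ne[of m] unfolding D_def by auto
  then obtain hh where hh: "\<And>m. hh m \<in> S m" and hh_N: "\<And>m. N (hh m) < D m + 1 / real (Suc m)"
    by metis
  define \<eta> where "\<eta> m = 2 * ((SUP m. D m) - D m) + 4 * (1 / real (Suc m))" for m
  have "\<eta> \<longlonglongrightarrow> 2 * ((SUP m. D m) - (SUP m. D m)) + 4 * 0"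
    unfolding \<eta>_def using D_lim LIMSEQ_inverse_real_of_nat
    by (intro tendsto_intros) (simp_all add: inverse_eq_divide)
  then have \<eta>_lim: "\<eta> \<longlonglongrightarrow> 0"
    by simp
  have "(\<integral>x. (hh m x - hh m' x)\<^sup>2 \<partial>M) \<le> \<eta> m" if "m \<le> m'" for m m'
  proof -
    have "D m \<le> N (\<lambda>x. (hh m x + hh m' x) / 2)"
      using hh decr[OF that] by (intro D_le mid) auto
    moreover have "1 / real (Suc m') \<le> 1 / real (Suc m)"
      using that by (simp add: frac_le)
    ultimately show ?thesis
      using integral_sq_diff_strategies[OF strat strat, OF hh hh, of m m'] hh_N[of m] hh_N[of m']
        D_le_Sup[of m']
      unfolding N_def \<eta>_def by (smt (verit))
  qed
  with hh \<eta>_lim show thesis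
    by (rule that)
qed

lemma exists_minimizing_L2_Cauchy_sequence:
  fixes \<Phi> :: "(nat \<Rightarrow> real) \<Rightarrow> real"
  defines "\<delta> \<equiv> Inf ((\<lambda>t. \<Phi> (act_prob t)) ` Collect (is_strategy X))"
  assumes nonneg: "\<And>v. 0 \<le> \<Phi> v"
    and cong: "\<And>v v'. (\<And>i. i \<le> n \<Longrightarrow> v i = v' i) \<Longrightarrow> \<Phi> v = \<Phi> v'"
    and mid: "\<And>v v'. \<Phi> (\<lambda>i. (v i + v' i) / 2) \<le> max (\<Phi> v) (\<Phi> v')"
  obtains hh \<eta> where "\<And>m. is_strategy X (hh m)" and "\<And>m. \<Phi> (act_prob (hh m)) < \<delta> + 1 / real (Suc m)"
    and "\<eta> \<longlonglongrightarrow> 0" and "\<And>m m'. m \<le> m' \<Longrightarrow> (\<integral>x. (hh m x - hh m' x)\<^sup>2 \<partial>M) \<le> \<eta> m"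
proof -
  define S where "S m = {t. is_strategy X t \<and> \<Phi> (act_prob t) < \<delta> + 1 / real (Suc m)}" for m
  have S_ne: "S m \<noteq> {}" for m
  proof -
    have ne: "Collect (is_strategy X) \<noteq> {}"
      by (auto simp: is_strategy_def intro!: exI[of _ "\<lambda>_. 0"])
    have "Inf ((\<lambda>t. \<Phi> (act_prob t)) ` Collect (is_strategy X)) < \<delta> + 1 / real (Suc m)"
      unfolding \<delta>_def by simp
    from cInf_lessD[OF _ this] ne show ?thesis
      unfolding S_def by auto
  qed
  have S_decr: "S m' \<subseteq> S m" if "m \<le> m'" for m m'
    using that frac_le[of 1 1 "real (Suc m)" "real (Suc m')"] unfolding S_def by auto
  have S_strat: "is_strategy X t" if "t \<in> S m" for m t
    using that by (simp add: S_def)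
  have S_mid: "(\<lambda>x. (t\<^sub>1 x + t\<^sub>2 x) / 2) \<in> S m" if "t\<^sub>1 \<in> S m" "t\<^sub>2 \<in> S m" for m t\<^sub>1 t\<^sub>2
  proof -
    have t: "is_strategy X t\<^sub>1" "is_strategy X t\<^sub>2"
      using that by (simp_all add: S_def)
    have "\<Phi> (act_prob (\<lambda>x. (t\<^sub>1 x + t\<^sub>2 x) / 2)) = \<Phi> (\<lambda>i. (act_prob t\<^sub>1 i + act_prob t\<^sub>2 i) / 2)"
      using t by (intro cong act_prob_midpoint)
    also have "\<dots> \<le> max (\<Phi> (act_prob t\<^sub>1)) (\<Phi> (act_prob t\<^sub>2))"
      by (rule mid)
    finally show ?thesis
      using that is_strategy_midpoint[OF t] unfolding S_def by auto
  qed
  obtain hh \<eta> where "\<And>m. hh m \<in> S m" and "\<eta> \<longlonglongrightarrow> 0"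
    and "\<And>m m'. m \<le> m' \<Longrightarrow> (\<integral>x. (hh m x - hh m' x)\<^sup>2 \<partial>M) \<le> \<eta> m"
    by (rule exists_L2_Cauchy_selection[where S=S]) (use S_ne S_decr S_strat S_mid in blast)+
  then show thesis
    by (intro that[of hh \<eta>]) (auto simp: S_def)
qed

lemma exists_minimizing_strategy:
  fixes \<Phi> :: "(nat \<Rightarrow> real) \<Rightarrow> real"
  assumes nonneg: "\<And>v. 0 \<le> \<Phi> v"
    and cong: "\<And>v v'. (\<And>i. i \<le> n \<Longrightarrow> v i = v' i) \<Longrightarrow> \<Phi> v = \<Phi> v'"
    and mid: "\<And>v v'. \<Phi> (\<lambda>i. (v i + v' i) / 2) \<le> max (\<Phi> v) (\<Phi> v')"
    and cont: "\<And>vs v. (\<And>i. i \<le> n \<Longrightarrow> (\<lambda>k. vs k i) \<longlonglongrightarrow> v i) \<Longrightarrow> (\<lambda>k. \<Phi> (vs k)) \<longlonglongrightarrow> \<Phi> v"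
  obtains t where "is_strategy X t" and "\<And>t'. is_strategy X t' \<Longrightarrow> \<Phi> (act_prob t) \<le> \<Phi> (act_prob t')"
proof -
  define \<delta> where "\<delta> = Inf ((\<lambda>t. \<Phi> (act_prob t)) ` Collect (is_strategy X))"
  have \<delta>_le: "\<delta> \<le> \<Phi> (act_prob t)" if "is_strategy X t" for t
    unfolding \<delta>_def using nonneg that by (intro cInf_lower bdd_belowI[where m=0]) auto
  obtain hh \<eta> where hh: "\<And>m. is_strategy X (hh m)" and hh_\<Phi>: "\<And>m. \<Phi> (act_prob (hh m)) < \<delta> + 1 / real (Suc m)"
    and \<eta>: "\<eta> \<longlonglongrightarrow> 0" and sq: "\<And>m m'. m \<le> m' \<Longrightarrow> (\<integral>x. (hh m x - hh m' x)\<^sup>2 \<partial>M) \<le> \<eta> m"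
    using exists_minimizing_L2_Cauchy_sequence[where \<Phi>=\<Phi>, OF nonneg cong mid] unfolding \<delta>_def by blast
  obtain t r where t: "is_strategy X t" and r: "strict_mono r"
    and lim: "AE x in M. (\<lambda>k. hh (r k) x) \<longlonglongrightarrow> t x"
    using strategy_AE_limit[OF hh strategy_L1_Cauchy[OF hh \<eta> sq]] by blast
  have \<Phi>_lim: "(\<lambda>k. \<Phi> (act_prob (hh (r k)))) \<longlonglongrightarrow> \<Phi> (act_prob t)"
    using act_prob_tendsto[OF hh t lim] by (rule cont)
  have bound_lim: "(\<lambda>k. \<delta> + 1 / real (Suc k)) \<longlonglongrightarrow> \<delta> + 0"
    using LIMSEQ_inverse_real_of_nat by (intro tendsto_intros) (simp add: inverse_eq_divide)
  have "\<Phi> (act_prob (hh (r k))) \<le> \<delta> + 1 / real (Suc k)" for k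
    using hh_\<Phi>[of "r k"] seq_suble[OF r, of k] frac_le[of 1 1 "real (Suc k)" "real (Suc (r k))"] by simp
  then have "\<Phi> (act_prob t) \<le> \<delta> + 0"
    by (intro LIMSEQ_le[OF \<Phi>_lim bound_lim] exI[of _ 0] allI impI)
  with t \<delta>_le show thesis
    by (intro that) (auto intro: order_trans)
qed

text \<open>At a minimiser of the squared shortfall, the first-order condition yields a functional
  separating \<open>w\<close> from the vectors \<open>act_prob t\<close> unless the shortfall vanishes.\<close>

lemma exists_strategy_dominating_target:
  assumes not_separated: "\<And>c. \<exists>t. is_strategy X t \<and> (\<Sum>i=0..n. c i * w i) \<le> (\<Sum>i=0..n. c i * act_prob t i)"
  obtains t where "is_strategy X t" and "\<And>i. i \<le> n \<Longrightarrow> d i * w i \<le> d i * act_prob t i"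
proof -
  obtain t where t: "is_strategy X t"
    and t_min: "\<And>t'. is_strategy X t' \<Longrightarrow> sq_shortfall n d w (act_prob t) \<le> sq_shortfall n d w (act_prob t')"
    using exists_minimizing_strategy[of "sq_shortfall n d w", OF sq_shortfall_nonneg sq_shortfall_cong
        sq_shortfall_midpoint_le tendsto_sq_shortfall]
    by blast
  define c where "c i = d i * max 0 (d i * (w i - act_prob t i))" for i
  have first_order: "(\<Sum>i=0..n. c i * (act_prob t' i - act_prob t i)) \<le> 0" if t': "is_strategy X t'" for t'
    unfolding c_def
  proof (rule sq_shortfall_first_order)
    fix \<epsilon> :: real assume "0 < \<epsilon>" "\<epsilon> \<le> 1"
    then have "sq_shortfall n d w (act_prob t) \<le> sq_shortfall n d w (act_prob (\<lambda>x. (1 - \<epsilon>) * t x + \<epsilon> * t' x))"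
      by (intro t_min is_strategy_convex_comb t t') auto
    also have "\<dots> = sq_shortfall n d w (\<lambda>i. act_prob t i + \<epsilon> * (act_prob t' i - act_prob t i))"
      by (intro sq_shortfall_cong, subst act_prob_convex_comb[OF t t']) (simp_all add: algebra_simps)
    finally show "sq_shortfall n d w (act_prob t)
        \<le> sq_shortfall n d w (\<lambda>i. act_prob t i + \<epsilon> * (act_prob t' i - act_prob t i))" .
  qed
  obtain t' where t': "is_strategy X t'" and "(\<Sum>i=0..n. c i * w i) \<le> (\<Sum>i=0..n. c i * act_prob t' i)"
    using not_separated by blast
  with first_order[OF t'] have "sq_shortfall n d w (act_prob t) \<le> 0"
    unfolding sq_shortfall_eq_sum c_def by (simp add: algebra_simps sum_subtractf)
  with t show thesis
    by (intro that sq_shortfall_le_0_imp)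
qed

end

section \<open>Comparison of two experiments\<close>

definition hinge_dominated :: "nat \<Rightarrow> real set \<Rightarrow> (nat \<Rightarrow> real \<Rightarrow> real) \<Rightarrow> real set \<Rightarrow> (nat \<Rightarrow> real \<Rightarrow> real) \<Rightarrow> bool" where
  "hinge_dominated n X f Y g \<longleftrightarrow>
     (\<forall>q\<in>hat_simplex n. \<forall>\<gamma>. signal_experiment.hinge_value n Y g q \<gamma> \<le> signal_experiment.hinge_value n X f q \<gamma>)"

locale experiment_pair = F: signal_experiment n X f + G: signal_experiment n Y g
  for n X f Y g
begin

definition linearly_dominated :: bool where
  "linearly_dominated \<longleftrightarrow>
     (\<forall>c s. is_strategy Y s \<longrightarrow>
        (\<exists>t. is_strategy X t \<and> (\<Sum>i=0..n. c i * G.act_prob s i) \<le> (\<Sum>i=0..n. c i * F.act_prob t i)))"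

lemma lb_dominates_imp_hinge_dominated:
  assumes lb: "lb_dominates n X f Y g"
  shows "hinge_dominated n X f Y g"
  unfolding hinge_dominated_def
proof (intro ballI allI)
  fix q \<gamma> assume q: "q \<in> hat_simplex n"
  have belief_mean: "(\<lambda>p. max 0 (belief_mean n \<gamma> p)) = (\<lambda>p. max 0 (\<gamma> 0 + (\<Sum>i=1..n. (\<gamma> i - \<gamma> 0) * p i)))"
    by (simp add: belief_mean_eq)
  have lb_q: "\<And>b C. convex_on UNIV C \<Longrightarrow> expect_post n Y g q (\<lambda>p. C (\<Sum>i=1..n. b i * p i))
      \<le> expect_post n X f q (\<lambda>p. C (\<Sum>i=1..n. b i * p i))"
    using lb q unfolding lb_dominates_def by blast
  have "expect_post n Y g q (\<lambda>p. max 0 (\<gamma> 0 + (\<Sum>i=1..n. (\<gamma> i - \<gamma> 0) * p i)))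
      \<le> expect_post n X f q (\<lambda>p. max 0 (\<gamma> 0 + (\<Sum>i=1..n. (\<gamma> i - \<gamma> 0) * p i)))"
    by (rule lb_q[OF convex_on_pos_part_shift])
  then show "G.hinge_value q \<gamma> \<le> F.hinge_value q \<gamma>"
    unfolding F.expect_post_hinge[OF q, symmetric] G.expect_post_hinge[OF q, symmetric] belief_mean .
qed

text \<open>Convex functions of the one-dimensional statistic \<open>\<Sum> b\<^sub>i p\<^sub>i\<close> are uniform limits of
  nonnegative combinations of hinges, and the expectation of each hinge is a hinge value.\<close>

lemma hinge_dominated_imp_lb_dominates:
  assumes H: "hinge_dominated n X f Y g"
  shows "lb_dominates n X f Y g"
  unfolding lb_dominates_def
proof (intro ballI allI impI)
  fix q and b :: "nat \<Rightarrow> real" and C :: "real \<Rightarrow> real"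
  assume q: "q \<in> hat_simplex n" and C: "convex_on UNIV C"
  define B where "B = (\<Sum>i=1..n. \<bar>b i\<bar>)"
  have "0 \<le> B"
    unfolding B_def by (simp add: sum_nonneg)
  then have "- B - 1 < B + 1"
    by simp
  show "expect_post n Y g q (\<lambda>p. C (\<Sum>i=1..n. b i * p i)) \<le> expect_post n X f q (\<lambda>p. C (\<Sum>i=1..n. b i * p i))"
  proof (rule field_le_epsilon)
    fix e :: real assume "0 < e"
    then have "0 < e / 2"
      by simp
    obtain \<alpha> \<beta> N c z
      where approx: "\<And>x. x \<in> {- B - 1..B + 1} \<Longrightarrow> \<bar>C x - hinge_sum \<alpha> \<beta> N c z x\<bar> \<le> e / 2"
        and c: "\<And>k. 0 \<le> c k"
      by (rule convex_on_hinge_sum_approx[OF C \<open>0 < e / 2\<close> \<open>- B - 1 < B + 1\<close>]) blast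
    let ?L = "hinge_sum \<alpha> \<beta> N c z"
    have close: "\<bar>C x - ?L x\<bar> \<le> e / 2" if "\<bar>x\<bar> \<le> (\<Sum>i=1..n. \<bar>b i\<bar>)" for x
      using that by (intro approx) (auto simp: B_def)
    have C_cont: "continuous_on UNIV C"
      by (rule convex_on_continuous[OF open_UNIV C])
    have "expect_post n Y g q (\<lambda>p. ?L (\<Sum>i=1..n. b i * p i)) \<le> expect_post n X f q (\<lambda>p. ?L (\<Sum>i=1..n. b i * p i))"
      unfolding F.expect_post_hinge_sum[OF q] G.expect_post_hinge_sum[OF q]
      using H q c by (intro add_left_mono sum_mono mult_left_mono) (auto simp: hinge_dominated_def)
    then show "expect_post n Y g q (\<lambda>p. C (\<Sum>i=1..n. b i * p i))
        \<le> expect_post n X f q (\<lambda>p. C (\<Sum>i=1..n. b i * p i)) + e"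
      using F.expect_post_approx[where b=b, OF q C_cont continuous_on_hinge_sum close]
        G.expect_post_approx[where b=b, OF q C_cont continuous_on_hinge_sum close]
      by linarith
  qed
qed

lemma Vbar_dominance_iff_hinge_dominated:
  "(\<forall>u. \<forall>q\<in>hat_simplex n. Vbar n X f u q \<ge> Vbar n Y g u q) \<longleftrightarrow> hinge_dominated n X f Y g"
proof
  assume V: "\<forall>u. \<forall>q\<in>hat_simplex n. Vbar n X f u q \<ge> Vbar n Y g u q"
  show "hinge_dominated n X f Y g"
    unfolding hinge_dominated_def
  proof (intro ballI allI)
    fix q and \<gamma> :: "nat \<Rightarrow> real" assume q: "q \<in> hat_simplex n"
    define u where "u a = (if a then \<gamma> else (\<lambda>_. 0))" for a :: bool
    from V q have "Vbar n Y g u q \<le> Vbar n X f u q"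
      by blast
    then show "G.hinge_value q \<gamma> \<le> F.hinge_value q \<gamma>"
      by (simp add: F.Vbar_eq[OF q] G.Vbar_eq[OF q] u_def)
  qed
next
  assume "hinge_dominated n X f Y g"
  then show "\<forall>u. \<forall>q\<in>hat_simplex n. Vbar n X f u q \<ge> Vbar n Y g u q"
    by (simp add: hinge_dominated_def F.Vbar_eq G.Vbar_eq)
qed

lemma hinge_dominated_imp_linearly_dominated:
  assumes H: "hinge_dominated n X f Y g"
  shows linearly_dominated
  unfolding linearly_dominated_def
proof (intro allI impI)
  fix c :: "nat \<Rightarrow> real" and s assume s: "is_strategy Y s"
  obtain q \<gamma> where q: "q \<in> hat_simplex n" and \<gamma>: "\<And>i. i \<le> n \<Longrightarrow> \<gamma> i * full_prior n q i = c i"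
    using exists_prior_weights[where n=n and c=c] by blast
  obtain t where t: "is_strategy X t"
    and t_max: "(\<Sum>i=0..n. \<gamma> i * full_prior n q i * F.act_prob t i) = F.hinge_value q \<gamma>"
    using F.exists_strategy_attaining_hinge_value[where q=q and \<gamma>=\<gamma>] by blast
  have "(\<Sum>i=0..n. c i * G.act_prob s i) = (\<Sum>i=0..n. \<gamma> i * full_prior n q i * G.act_prob s i)"
    using \<gamma> by (intro sum.cong) auto
  also have "\<dots> \<le> G.hinge_value q \<gamma>"
    by (rule G.strategy_value_le_hinge_value[OF s])
  also have "\<dots> \<le> F.hinge_value q \<gamma>"
    using H q by (simp add: hinge_dominated_def)
  also have "\<dots> = (\<Sum>i=0..n. c i * F.act_prob t i)"
    unfolding t_max[symmetric] using \<gamma> by (intro sum.cong) auto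
  finally show "\<exists>t. is_strategy X t \<and> (\<Sum>i=0..n. c i * G.act_prob s i) \<le> (\<Sum>i=0..n. c i * F.act_prob t i)"
    using t by blast
qed

lemma linearly_dominated_imp_hinge_dominated:
  assumes linearly_dominated
  shows "hinge_dominated n X f Y g"
  unfolding hinge_dominated_def
proof (intro ballI allI)
  fix q and \<gamma> :: "nat \<Rightarrow> real"
  obtain s where s: "is_strategy Y s"
    and s_max: "(\<Sum>i=0..n. \<gamma> i * full_prior n q i * G.act_prob s i) = G.hinge_value q \<gamma>"
    using G.exists_strategy_attaining_hinge_value[where q=q and \<gamma>=\<gamma>] by blast
  obtain t where t: "is_strategy X t"
    and "(\<Sum>i=0..n. \<gamma> i * full_prior n q i * G.act_prob s i) \<le> (\<Sum>i=0..n. \<gamma> i * full_prior n q i * F.act_prob t i)"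
    using assms[unfolded linearly_dominated_def, rule_format, where c="\<lambda>i. \<gamma> i * full_prior n q i", OF s]
    by blast
  with s_max F.strategy_value_le_hinge_value[OF t, where q=q and \<gamma>=\<gamma>] show "G.hinge_value q \<gamma> \<le> F.hinge_value q \<gamma>"
    by linarith
qed

lemma strategy_dominance_imp_linearly_dominated:
  assumes D: "\<forall>u s. is_strategy Y s \<longrightarrow>
      (\<exists>t. is_strategy X t \<and> (\<forall>i\<le>n. strat_payoff X f u t i \<ge> strat_payoff Y g u s i))"
  shows linearly_dominated
  unfolding linearly_dominated_def
proof (intro allI impI)
  fix c :: "nat \<Rightarrow> real" and s assume s: "is_strategy Y s"
  define u where "u a = (if a then c else (\<lambda>_. 0))" for a :: bool
  obtain t where t: "is_strategy X t" and payoff: "\<And>i. i \<le> n \<Longrightarrow> strat_payoff X f u t i \<ge> strat_payoff Y g u s i"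
    using D s by blast
  have "c i * G.act_prob s i \<le> c i * F.act_prob t i" if "i \<le> n" for i
    using payoff[OF that] by (simp add: F.strat_payoff_eq[OF t that] G.strat_payoff_eq[OF s that] u_def)
  then have "(\<Sum>i=0..n. c i * G.act_prob s i) \<le> (\<Sum>i=0..n. c i * F.act_prob t i)"
    by (intro sum_mono) auto
  with t show "\<exists>t. is_strategy X t \<and> (\<Sum>i=0..n. c i * G.act_prob s i) \<le> (\<Sum>i=0..n. c i * F.act_prob t i)"
    by blast
qed

lemma linearly_dominated_imp_strategy_dominance:
  assumes linearly_dominated and s: "is_strategy Y s"
  obtains t where "is_strategy X t" and "\<And>i. i \<le> n \<Longrightarrow> strat_payoff X f u t i \<ge> strat_payoff Y g u s i"
proof -
  have "\<exists>t. is_strategy X t \<and> (\<Sum>i=0..n. c i * G.act_prob s i) \<le> (\<Sum>i=0..n. c i * F.act_prob t i)" for c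
    using assms unfolding linearly_dominated_def by blast
  then obtain t where t: "is_strategy X t" and dom: "\<And>i. i \<le> n \<Longrightarrow>
      (u True i - u False i) * G.act_prob s i \<le> (u True i - u False i) * F.act_prob t i"
    by (rule F.exists_strategy_dominating_target[where w="G.act_prob s" and d="\<lambda>i. u True i - u False i"])
      blast
  have "strat_payoff X f u t i \<ge> strat_payoff Y g u s i" if "i \<le> n" for i
    using dom[OF that] by (simp add: F.strat_payoff_eq[OF t that] G.strat_payoff_eq[OF s that])
  with t show thesis
    by (rule that)
qed

lemma strategy_dominance_iff_hinge_dominated:
  "(\<forall>u s. is_strategy Y s \<longrightarrow>
      (\<exists>t. is_strategy X t \<and> (\<forall>i\<le>n. strat_payoff X f u t i \<ge> strat_payoff Y g u s i)))
    \<longleftrightarrow> hinge_dominated n X f Y g"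
proof
  assume "\<forall>u s. is_strategy Y s \<longrightarrow>
      (\<exists>t. is_strategy X t \<and> (\<forall>i\<le>n. strat_payoff X f u t i \<ge> strat_payoff Y g u s i))"
  then show "hinge_dominated n X f Y g"
    by (intro linearly_dominated_imp_hinge_dominated strategy_dominance_imp_linearly_dominated)
next
  assume "hinge_dominated n X f Y g"
  then have L: linearly_dominated
    by (rule hinge_dominated_imp_linearly_dominated)
  show "\<forall>u s. is_strategy Y s \<longrightarrow>
      (\<exists>t. is_strategy X t \<and> (\<forall>i\<le>n. strat_payoff X f u t i \<ge> strat_payoff Y g u s i))"
  proof (intro allI impI)
    fix u s assume "is_strategy Y s"
    then obtain t where "is_strategy X t" and "\<And>i. i \<le> n \<Longrightarrow> strat_payoff X f u t i \<ge> strat_payoff Y g u s i"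
      by (rule linearly_dominated_imp_strategy_dominance[OF L]) blast
    then show "\<exists>t. is_strategy X t \<and> (\<forall>i\<le>n. strat_payoff X f u t i \<ge> strat_payoff Y g u s i)"
      by blast
  qed
qed

end

theorem lemma2:
  fixes n :: nat and X Y :: "real set" and f g :: "nat \<Rightarrow> real \<Rightarrow> real"
  assumes "is_experiment n X f" and "is_experiment n Y g"
  shows "(lb_dominates n X f Y g \<longleftrightarrow>
            (\<forall>u :: bool \<Rightarrow> nat \<Rightarrow> real. \<forall>q\<in>hat_simplex n. Vbar n X f u q \<ge> Vbar n Y g u q))
       \<and> (lb_dominates n X f Y g \<longleftrightarrow>
            (\<forall>(u :: bool \<Rightarrow> nat \<Rightarrow> real) (s :: real \<Rightarrow> real). is_strategy Y s \<longrightarrow>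
               (\<exists>t. is_strategy X t \<and> (\<forall>i\<le>n. strat_payoff X f u t i \<ge> strat_payoff Y g u s i))))"
proof -
  interpret experiment_pair n X f Y g
    using assms by (intro experiment_pair.intro signal_experiment.intro)
  have "lb_dominates n X f Y g \<longleftrightarrow> hinge_dominated n X f Y g"
    using lb_dominates_imp_hinge_dominated hinge_dominated_imp_lb_dominates by blast
  then show ?thesis
    using Vbar_dominance_iff_hinge_dominated strategy_dominance_iff_hinge_dominated by blast
qed

end
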